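(* Let $n\ge1$, $N=\{1,\dots,n\}$, $A=(a_{ij})\in[0,1]^{n\times n}$, $b=(b_1,\dots,b_n)$ with $b_i>0$, and assume $\check\alpha_j\le 1$ for all $j\in N$. Let $\lambda\in[0,+\infty)$ and $x=(x_1,\dots,x_n)\in[0,1]^n$. Then $x\in V^*(A,\lambda)$ if and only if there exists $p=(p_1,\dots,p_n)\in P$ such that $$\begin{cases} x_j=d_{0j}=1 & \text{for all } j\in N^*,\\ d_{(p_j-1)j}\le x_j\le d_{p_jj} & \text{for all } j\in N\setminus N^*,\\ \sum_{j\in N^*}a_{ij}+\sum_{j\in N\setminus N^*}\big[\gamma_{ij}\,x_j+(1-\gamma_{ij})\,a_{ij}\big]\ge b_i & \text{for all } i\in N,\\ \sum_{j\in N^*}a_{ij}+\sum_{j\in N\setminus N^*}\big[\gamma_{ij}\,x_j+(1-\gamma_{ij})\,a_{ij}\big]=\lambda x_i & \text{for all } i\in N,\end{cases}$$ where $\gamma_{ij}$ (depending on $p$) is as defined in the context.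
   Context: $\theta=(0,\dots,0)$. For $x\in[0,1]^n$, write $(A\odot x^T)_i=\sum_{j\in N}\min\{a_{ij},x_j\}$ (ordinary addition). $V^*(A,\lambda)=\{x\in[0,1]^n: (A\odot x^T)_i\ge b_i \text{ and } (A\odot x^T)_i=\lambda x_i \text{ for all } i\in N,\ x\neq\theta\}$ (constrained eigenvectors). Let $\check\alpha_j=\max\big(\{0\}\cup\{b_i-\sum_{k\in N\setminus\{j\}}a_{ik}: i\in N\}\big)$. For $j\in N$, let $D_j=\{d_{0j}<d_{1j}<\dots<d_{l_jj}\}$ be the set $\{\check\alpha_j\}\cup\{a_{ij}: i\in N,\ a_{ij}\ge\check\alpha_j\}\cup\{1\}$ listed increasingly, so $d_{0j}=\check\alpha_j$, $d_{l_jj}=1$, each $d_{pj}$ with $0<p<l_j$ is some $a_{ij}$, and every $a_{ij}\ge\check\alpha_j$ equals some $d_{pj}$. Let $N^*=\{j\in N:\check\alpha_j=1\}$; let $P_j=\{0\}$ if $j\in N^*$ and $P_j=\{p: d_{pj}\in D_j,\ d_{pj}>\check\alpha_j\}=\{1,\dots,l_j\}$ if $j\in N\setminus N^*$; $P=P_1\times\dots\times P_n$. For $p\in P$, $i\in N$, $j\in N\setminus N^*$: $\gamma_{ij}=1$ if $d_{p_jj}\le a_{ij}$ and $\gamma_{ij}=0$ if $a_{ij}\le d_{(p_j-1)j}$. *)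

theory Defs
  imports Main "HOL.Real"
begin

text \<open>Index set N = {0..<n} (0-based relabelling of {1..n}).
 Matrices: nat => nat => real, vectors: nat => real, only entries with indices < n matter.\<close>

definition maxmin_prod :: "nat \<Rightarrow> (nat \<Rightarrow> nat \<Rightarrow> real) \<Rightarrow> (nat \<Rightarrow> real) \<Rightarrow> nat \<Rightarrow> real" where
  "maxmin_prod n A x i = (\<Sum>j<n. min (A i j) (x j))"

definition V_star :: "nat \<Rightarrow> (nat \<Rightarrow> nat \<Rightarrow> real) \<Rightarrow> (nat \<Rightarrow> real) \<Rightarrow> real \<Rightarrow> (nat \<Rightarrow> real) set" where
  "V_star n A b lam = {x. (\<forall>j<n. 0 \<le> x j \<and> x j \<le> 1)
      \<and> (\<forall>i<n. maxmin_prod n A x i \<ge> b i \<and> maxmin_prod n A x i = lam * x i)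
      \<and> (\<exists>j<n. x j \<noteq> 0)}"

definition alpha_check :: "nat \<Rightarrow> (nat \<Rightarrow> nat \<Rightarrow> real) \<Rightarrow> (nat \<Rightarrow> real) \<Rightarrow> nat \<Rightarrow> real" where
  "alpha_check n A b j = Max ({0} \<union> {b i - (\<Sum>k\<in>{..<n} - {j}. A i k) | i. i < n})"

definition Dset :: "nat \<Rightarrow> (nat \<Rightarrow> nat \<Rightarrow> real) \<Rightarrow> (nat \<Rightarrow> real) \<Rightarrow> nat \<Rightarrow> real set" where
  "Dset n A b j = {alpha_check n A b j} \<union> {A i j | i. i < n \<and> A i j \<ge> alpha_check n A b j} \<union> {1}"

definition dval :: "nat \<Rightarrow> (nat \<Rightarrow> nat \<Rightarrow> real) \<Rightarrow> (nat \<Rightarrow> real) \<Rightarrow> nat \<Rightarrow> nat \<Rightarrow> real" where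
  "dval n A b p j = sorted_list_of_set (Dset n A b j) ! p"

definition lval :: "nat \<Rightarrow> (nat \<Rightarrow> nat \<Rightarrow> real) \<Rightarrow> (nat \<Rightarrow> real) \<Rightarrow> nat \<Rightarrow> nat" where
  "lval n A b j = card (Dset n A b j) - 1"

definition Nstar :: "nat \<Rightarrow> (nat \<Rightarrow> nat \<Rightarrow> real) \<Rightarrow> (nat \<Rightarrow> real) \<Rightarrow> nat set" where
  "Nstar n A b = {j. j < n \<and> alpha_check n A b j = 1}"

definition Pset :: "nat \<Rightarrow> (nat \<Rightarrow> nat \<Rightarrow> real) \<Rightarrow> (nat \<Rightarrow> real) \<Rightarrow> (nat \<Rightarrow> nat) set" where
  "Pset n A b = {p. \<forall>j<n. (j \<in> Nstar n A b \<longrightarrow> p j = 0)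
      \<and> (j \<notin> Nstar n A b \<longrightarrow> p j \<in> {p'. dval n A b p' j \<in> Dset n A b j \<and> dval n A b p' j > alpha_check n A b j \<and> p' \<le> lval n A b j})}"

text \<open>gamma_ij: 1 if d_{p_j j} <= a_ij, and 0 otherwise (then a_ij <= d_{(p_j-1) j}).\<close>
definition gamma :: "nat \<Rightarrow> (nat \<Rightarrow> nat \<Rightarrow> real) \<Rightarrow> (nat \<Rightarrow> real) \<Rightarrow> (nat \<Rightarrow> nat) \<Rightarrow> nat \<Rightarrow> nat \<Rightarrow> real" where
  "gamma n A b p i j = (if dval n A b (p j) j \<le> A i j then 1 else 0)"

end

theory Submission
  imports Defs
begin

text \<open>A solution satisfies \<open>b_i \<le> (A \<odot> x)_i \<le> x_j + \<Sum>_{k \<noteq> j} a_ik\<close>, hence \<open>x_j \<ge> \<alpha>_j\<close>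
  for all \<open>j\<close>. So \<open>x_j = 1\<close> on \<open>N*\<close>, and every other \<open>x_j\<close> lies in one of the intervals
  \<open>[d_{p-1,j}, d_{p,j}]\<close> into which the breakpoints \<open>D_j\<close> cut \<open>[\<alpha>_j, 1]\<close>. No \<open>a_ij \<ge> \<alpha>_j\<close> lies
  strictly inside such an interval, so there \<open>min a_ij x_j\<close> is \<open>x_j\<close> if \<open>d_{p,j} \<le> a_ij\<close> and
  \<open>a_ij\<close> otherwise: the max-min product coincides with the linear expression defined by \<open>\<gamma>\<close>,
  and the two systems are equivalent.\<close>

lemma nth_sorted_list_of_set_0:
  fixes D :: "'a::linorder set"
  assumes "finite D" "D \<noteq> {}"
  shows "sorted_list_of_set D ! 0 = Min D"
  using sorted_list_of_set_nonempty[OF assms] by simp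

lemma nth_sorted_list_of_set_mono:
  fixes D :: "'a::linorder set"
  assumes "finite D" "i \<le> j" "j < card D"
  shows "sorted_list_of_set D ! i \<le> sorted_list_of_set D ! j"
  using assms by (simp add: sorted_nth_mono)

lemma nth_sorted_list_of_set_strict_mono:
  fixes D :: "'a::linorder set"
  assumes "finite D" "i < j" "j < card D"
  shows "sorted_list_of_set D ! i < sorted_list_of_set D ! j"
  using assms sorted_wrt_nth_less[of "(<)" "sorted_list_of_set D" i j] by simp

lemma nth_sorted_list_of_set_last:
  fixes D :: "'a::linorder set"
  assumes "finite D" "D \<noteq> {}"
  shows "sorted_list_of_set D ! (card D - 1) = Max D"
proof (rule Max_eqI[symmetric])
  let ?L = "sorted_list_of_set D"
  have len: "length ?L = card D" and set: "set ?L = D" using assms(1) by simp_all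
  have "0 < card D" using assms by (simp add: card_gt_0_iff)
  then show "?L ! (card D - 1) \<in> D" using len set by (metis diff_less nth_mem zero_less_one)
  fix y assume "y \<in> D"
  then obtain k where "k < card D" "y = ?L ! k" using len set by (metis in_set_conv_nth)
  then show "y \<le> ?L ! (card D - 1)" using nth_sorted_list_of_set_mono[OF assms(1)] by simp
qed (use assms in simp)

lemma nth_sorted_list_of_set_gap:
  fixes D :: "'a::linorder set"
  assumes "finite D" "a \<in> D" "0 < p" "p < card D" "a < sorted_list_of_set D ! p"
  shows "a \<le> sorted_list_of_set D ! (p - 1)"
proof -
  let ?L = "sorted_list_of_set D"
  obtain k where k: "k < card D" "a = ?L ! k"
    using assms(1,2) by (metis in_set_conv_nth length_sorted_list_of_set set_sorted_list_of_set)
  have "k < p"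
    using nth_sorted_list_of_set_mono[OF assms(1), of p k] k assms(5) by (meson leI not_le)
  then show ?thesis using nth_sorted_list_of_set_mono[OF assms(1), of k "p - 1"] k assms(4) by simp
qed

lemma nth_sorted_list_of_set_bracket:
  fixes D :: "'a::linorder set"
  assumes "finite D" "2 \<le> card D" "Min D \<le> t" "t \<le> Max D"
  shows "\<exists>p. 0 < p \<and> p < card D \<and> sorted_list_of_set D ! (p - 1) \<le> t \<and> t \<le> sorted_list_of_set D ! p"
proof -
  let ?L = "sorted_list_of_set D"
  define p where "p = (LEAST p. 0 < p \<and> t \<le> ?L ! p)"
  have "D \<noteq> {}" using assms(2) by auto
  then have last: "0 < card D - 1 \<and> t \<le> ?L ! (card D - 1)"
    using assms nth_sorted_list_of_set_last[OF assms(1) \<open>D \<noteq> {}\<close>] by simp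
  then have p: "0 < p \<and> t \<le> ?L ! p" and "p \<le> card D - 1"
    unfolding p_def by (rule LeastI, rule Least_le)
  moreover have "?L ! (p - 1) \<le> t"
  proof (cases "p - 1 = 0")
    case True
    show ?thesis unfolding True using assms(3) nth_sorted_list_of_set_0[OF assms(1) \<open>D \<noteq> {}\<close>] by simp
  next
    case False
    have "p - 1 < p" using p by simp
    then have "\<not> (0 < p - 1 \<and> t \<le> ?L ! (p - 1))" unfolding p_def by (rule not_less_Least)
    then show ?thesis using False by simp
  qed
  ultimately show ?thesis using last by (intro exI[of _ p]) auto
qed

lemma finite_Dset: "finite (Dset n A b j)"
proof -
  have "Dset n A b j \<subseteq> {alpha_check n A b j, 1} \<union> (\<lambda>i. A i j) ` {..<n}"
    unfolding Dset_def by auto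
  then show ?thesis by (rule finite_subset) simp
qed

lemma alpha_check_in_Dset: "alpha_check n A b j \<in> Dset n A b j"
  and one_in_Dset: "1 \<in> Dset n A b j"
  unfolding Dset_def by auto

lemma Dset_nonempty: "Dset n A b j \<noteq> {}"
  using one_in_Dset by blast

lemma Min_Dset:
  assumes "alpha_check n A b j \<le> 1"
  shows "Min (Dset n A b j) = alpha_check n A b j"
  using assms by (intro Min_eqI finite_Dset alpha_check_in_Dset) (auto simp: Dset_def)

lemma Max_Dset:
  assumes "alpha_check n A b j \<le> 1" "\<forall>i<n. A i j \<le> 1"
  shows "Max (Dset n A b j) = 1"
  using assms by (intro Max_eqI finite_Dset one_in_Dset) (auto simp: Dset_def)

lemma dval_0:
  assumes "alpha_check n A b j \<le> 1"
  shows "dval n A b 0 j = alpha_check n A b j"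
  unfolding dval_def
  using nth_sorted_list_of_set_0[OF finite_Dset Dset_nonempty] Min_Dset[OF assms] by simp

lemma dval_mono: "i \<le> k \<Longrightarrow> k < card (Dset n A b j) \<Longrightarrow> dval n A b i j \<le> dval n A b k j"
  unfolding dval_def by (rule nth_sorted_list_of_set_mono[OF finite_Dset])

lemma le_lval_iff_less_card: "p \<le> lval n A b j \<longleftrightarrow> p < card (Dset n A b j)"
  using card_gt_0_iff[of "Dset n A b j"] finite_Dset Dset_nonempty unfolding lval_def by auto

lemma two_le_card_Dset:
  assumes "alpha_check n A b j < 1"
  shows "2 \<le> card (Dset n A b j)"
proof -
  have "card {alpha_check n A b j, 1} \<le> card (Dset n A b j)"
    using alpha_check_in_Dset one_in_Dset by (intro card_mono finite_Dset) blast
  then show ?thesis using assms by simp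
qed

lemma Pset_iff:
  assumes "\<forall>j<n. alpha_check n A b j \<le> 1"
  shows "p \<in> Pset n A b \<longleftrightarrow>
    (\<forall>j<n. (j \<in> Nstar n A b \<longrightarrow> p j = 0) \<and> (j \<notin> Nstar n A b \<longrightarrow> p j \<in> {1..lval n A b j}))"
proof -
  have "dval n A b q j \<in> Dset n A b j \<and> alpha_check n A b j < dval n A b q j \<and> q \<le> lval n A b j
      \<longleftrightarrow> q \<in> {1..lval n A b j}" if "j < n" for j q
  proof (cases "q \<le> lval n A b j")
    case True
    then have q: "q < card (Dset n A b j)" by (simp add: le_lval_iff_less_card)
    then have "dval n A b q j \<in> Dset n A b j"
      unfolding dval_def using finite_Dset by (metis length_sorted_list_of_set nth_mem set_sorted_list_of_set)
    moreover have "alpha_check n A b j < dval n A b q j \<longleftrightarrow> 0 < q"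
    proof -
      have "dval n A b 0 j = alpha_check n A b j" using dval_0 assms that by blast
      moreover have "dval n A b 0 j < dval n A b q j" if "0 < q"
        unfolding dval_def using nth_sorted_list_of_set_strict_mono[OF finite_Dset that q] .
      ultimately show ?thesis by (cases "q = 0") auto
    qed
    ultimately show ?thesis using True by auto
  qed simp
  then show ?thesis unfolding Pset_def by auto
qed

lemma alpha_check_le_of_maxmin_prod_ge:
  assumes "\<forall>i<n. b i \<le> maxmin_prod n A x i" "j < n" "0 \<le> x j"
  shows "alpha_check n A b j \<le> x j"
proof -
  have "b i - (\<Sum>k\<in>{..<n} - {j}. A i k) \<le> x j" if "i < n" for i
  proof -
    have "b i \<le> maxmin_prod n A x i" using assms(1) that by blast
    also have "\<dots> = min (A i j) (x j) + (\<Sum>k\<in>{..<n} - {j}. min (A i k) (x k))"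
      unfolding maxmin_prod_def using assms(2) by (simp add: sum.remove)
    also have "\<dots> \<le> x j + (\<Sum>k\<in>{..<n} - {j}. A i k)"
      by (intro add_mono sum_mono) auto
    finally show ?thesis by simp
  qed
  then show ?thesis unfolding alpha_check_def using assms(3) by (subst Max_le_iff) auto
qed

lemma Pset_bracketing_exists:
  assumes "\<forall>i<n. \<forall>j<n. A i j \<le> 1" "\<forall>j<n. alpha_check n A b j \<le> x j \<and> x j \<le> 1"
  obtains p where "p \<in> Pset n A b"
    "\<forall>j<n. j \<notin> Nstar n A b \<longrightarrow> dval n A b (p j - 1) j \<le> x j \<and> x j \<le> dval n A b (p j) j"
proof -
  have "\<exists>q. (j \<in> Nstar n A b \<longrightarrow> q = 0) \<and> (j < n \<and> j \<notin> Nstar n A b \<longrightarrow>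
      q \<in> {1..lval n A b j} \<and> dval n A b (q - 1) j \<le> x j \<and> x j \<le> dval n A b q j)" for j
  proof (cases "j < n \<and> j \<notin> Nstar n A b")
    case True
    then have al: "alpha_check n A b j < 1" using assms(2) unfolding Nstar_def by force
    have "Min (Dset n A b j) \<le> x j" "x j \<le> Max (Dset n A b j)"
      using True assms Min_Dset Max_Dset al by auto
    then obtain q where "0 < q" "q < card (Dset n A b j)"
      "dval n A b (q - 1) j \<le> x j" "x j \<le> dval n A b q j"
      unfolding dval_def
      using nth_sorted_list_of_set_bracket[OF finite_Dset two_le_card_Dset[OF al]] by blast
    then show ?thesis using True by (intro exI[of _ q]) (auto simp: le_lval_iff_less_card)
  qed (auto simp: Nstar_def)
  then obtain p where p: "\<forall>j. (j \<in> Nstar n A b \<longrightarrow> p j = 0) \<and> (j < n \<and> j \<notin> Nstar n A b \<longrightarrow>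
      p j \<in> {1..lval n A b j} \<and> dval n A b (p j - 1) j \<le> x j \<and> x j \<le> dval n A b (p j) j)"
    by metis
  have "\<forall>j<n. alpha_check n A b j \<le> 1" using assms(2) by force
  with p show ?thesis using that Pset_iff by blast
qed

lemma min_eq_gamma_term:
  assumes "alpha_check n A b j \<le> 1" "i < n" "p j \<in> {1..lval n A b j}"
    "dval n A b (p j - 1) j \<le> x j" "x j \<le> dval n A b (p j) j"
  shows "min (A i j) (x j) = gamma n A b p i j * x j + (1 - gamma n A b p i j) * A i j"
proof (cases "dval n A b (p j) j \<le> A i j")
  case True
  then show ?thesis unfolding gamma_def using assms(5) by simp
next
  case False
  have p: "0 < p j" "p j < card (Dset n A b j)"
    using assms(3) by (auto simp: le_lval_iff_less_card)
  have "A i j \<le> dval n A b (p j - 1) j"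
  proof (cases "alpha_check n A b j \<le> A i j")
    case True
    then have "A i j \<in> Dset n A b j" unfolding Dset_def using assms(2) by auto
    then show ?thesis
      using nth_sorted_list_of_set_gap[OF finite_Dset _ p] False unfolding dval_def by simp
  next
    case False
    then show ?thesis using dval_0[OF assms(1)] dval_mono[of 0 "p j - 1" n A b j] p by fastforce
  qed
  then show ?thesis unfolding gamma_def using False assms(4) by simp
qed

definition linearized_maxmin_prod ::
    "nat \<Rightarrow> (nat \<Rightarrow> nat \<Rightarrow> real) \<Rightarrow> (nat \<Rightarrow> real) \<Rightarrow> (nat \<Rightarrow> nat) \<Rightarrow> (nat \<Rightarrow> real) \<Rightarrow> nat \<Rightarrow> real" where
  "linearized_maxmin_prod n A b p x i = (\<Sum>j\<in>Nstar n A b. A i j)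
    + (\<Sum>j\<in>{..<n} - Nstar n A b. gamma n A b p i j * x j + (1 - gamma n A b p i j) * A i j)"

lemma maxmin_prod_eq_linearized:
  assumes "\<forall>j<n. A i j \<le> 1" "\<forall>j<n. alpha_check n A b j \<le> 1" "p \<in> Pset n A b" "i < n"
    "\<forall>j \<in> Nstar n A b. x j = 1"
    "\<forall>j<n. j \<notin> Nstar n A b \<longrightarrow> dval n A b (p j - 1) j \<le> x j \<and> x j \<le> dval n A b (p j) j"
  shows "maxmin_prod n A x i = linearized_maxmin_prod n A b p x i"
proof -
  have sub: "Nstar n A b \<subseteq> {..<n}" unfolding Nstar_def by auto
  have "maxmin_prod n A x i
      = (\<Sum>j\<in>Nstar n A b. min (A i j) (x j)) + (\<Sum>j\<in>{..<n} - Nstar n A b. min (A i j) (x j))"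
    unfolding maxmin_prod_def using sum.subset_diff[OF sub] by (simp add: add.commute)
  also have "(\<Sum>j\<in>Nstar n A b. min (A i j) (x j)) = (\<Sum>j\<in>Nstar n A b. A i j)"
    using assms(1,5) sub by (intro sum.cong) auto
  also have "(\<Sum>j\<in>{..<n} - Nstar n A b. min (A i j) (x j))
      = (\<Sum>j\<in>{..<n} - Nstar n A b. gamma n A b p i j * x j + (1 - gamma n A b p i j) * A i j)"
    using assms(2-4,6) Pset_iff[OF assms(2)] by (intro sum.cong min_eq_gamma_term) auto
  finally show ?thesis unfolding linearized_maxmin_prod_def .
qed

lemma V_star_iff:
  assumes "0 < n" "\<forall>i<n. 0 < b i" "\<forall>j<n. 0 \<le> x j \<and> x j \<le> 1"
  shows "x \<in> V_star n A b lam \<longleftrightarrow>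
    (\<forall>i<n. b i \<le> maxmin_prod n A x i \<and> maxmin_prod n A x i = lam * x i)"
proof -
  have "\<exists>j<n. x j \<noteq> 0" if "b 0 \<le> maxmin_prod n A x 0"
  proof (rule ccontr)
    assume "\<not> (\<exists>j<n. x j \<noteq> 0)"
    then have "maxmin_prod n A x 0 \<le> 0"
      unfolding maxmin_prod_def by (intro sum_nonpos) simp
    then show False using that assms(1,2) by force
  qed
  then show ?thesis unfolding V_star_def using assms by auto
qed

theorem theorem4p1:
  fixes n :: nat and A :: "nat \<Rightarrow> nat \<Rightarrow> real" and b x :: "nat \<Rightarrow> real" and lam :: real
  assumes "n \<ge> 1"
    and "\<forall>i<n. \<forall>j<n. 0 \<le> A i j \<and> A i j \<le> 1"
    and "\<forall>i<n. b i > 0"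
    and "\<forall>j<n. alpha_check n A b j \<le> 1"
    and "lam \<ge> 0"
    and "\<forall>j<n. 0 \<le> x j \<and> x j \<le> 1"
  shows "x \<in> V_star n A b lam \<longleftrightarrow>
    (\<exists>p \<in> Pset n A b.
       (\<forall>j \<in> Nstar n A b. x j = dval n A b 0 j \<and> dval n A b 0 j = 1)
     \<and> (\<forall>j<n. j \<notin> Nstar n A b \<longrightarrow> dval n A b (p j - 1) j \<le> x j \<and> x j \<le> dval n A b (p j) j)
     \<and> (\<forall>i<n. (\<Sum>j\<in>Nstar n A b. A i j)
              + (\<Sum>j\<in>{..<n} - Nstar n A b. gamma n A b p i j * x j + (1 - gamma n A b p i j) * A i j) \<ge> b i)
     \<and> (\<forall>i<n. (\<Sum>j\<in>Nstar n A b. A i j)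
              + (\<Sum>j\<in>{..<n} - Nstar n A b. gamma n A b p i j * x j + (1 - gamma n A b p i j) * A i j) = lam * x i))"
proof -
  let ?brackets = "\<lambda>p. \<forall>j<n. j \<notin> Nstar n A b \<longrightarrow> dval n A b (p j - 1) j \<le> x j \<and> x j \<le> dval n A b (p j) j"
  let ?Nstar_ones = "\<forall>j \<in> Nstar n A b. x j = dval n A b 0 j \<and> dval n A b 0 j = 1"
  have linearize: "\<forall>i<n. maxmin_prod n A x i = linearized_maxmin_prod n A b p x i"
    if "p \<in> Pset n A b" ?Nstar_ones "?brackets p" for p
    using maxmin_prod_eq_linearized[OF _ assms(4) that(1)] assms(2) that(2,3) by simp
  have "0 < n" using assms(1) by simp
  show ?thesis
    unfolding V_star_iff[OF \<open>0 < n\<close> assms(3,6)] linearized_maxmin_prod_def[symmetric]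
  proof
    assume sys: "\<forall>i<n. b i \<le> maxmin_prod n A x i \<and> maxmin_prod n A x i = lam * x i"
    then have above_alpha: "\<forall>j<n. alpha_check n A b j \<le> x j \<and> x j \<le> 1"
      using alpha_check_le_of_maxmin_prod_ge assms(6) by blast
    then have Nstar_ones: ?Nstar_ones
      using dval_0 unfolding Nstar_def by force
    obtain p where "p \<in> Pset n A b" "?brackets p"
      using Pset_bracketing_exists assms(2) above_alpha by blast
    with sys Nstar_ones linearize show "\<exists>p \<in> Pset n A b. ?Nstar_ones \<and> ?brackets p
      \<and> (\<forall>i<n. b i \<le> linearized_maxmin_prod n A b p x i)
      \<and> (\<forall>i<n. linearized_maxmin_prod n A b p x i = lam * x i)"
      by metis
  next
    assume "\<exists>p \<in> Pset n A b. ?Nstar_ones \<and> ?brackets p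
      \<and> (\<forall>i<n. b i \<le> linearized_maxmin_prod n A b p x i)
      \<and> (\<forall>i<n. linearized_maxmin_prod n A b p x i = lam * x i)"
    with linearize show "\<forall>i<n. b i \<le> maxmin_prod n A x i \<and> maxmin_prod n A x i = lam * x i"
      by metis
  qed
qed

end
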